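(* Let $\zeta:\mathbb{R}\to[0,\infty)$ be continuous and decreasing with $\int_0^\infty\zeta(t)\,dt<+\infty$. If $u_k,u\in\mathrm{Conv}_{\mathrm{coe}}(\mathbb{R}^n)$ are such that $u_k$ epi-converges to $u$, then $\delta^H_\zeta(u_k,u)\to 0$ as $k\to\infty$.
   Context: $\mathrm{Conv}_{\mathrm{coe}}(\mathbb{R}^n)$ is the set of proper, lower semicontinuous, convex, coercive functions $u:\mathbb{R}^n\to\mathbb{R}\cup\{+\infty\}$. With $\mathcal{K}^n$ the non-empty compact convex sets and $d_H$ the Hausdorff metric, define $\hat d_H$ on $\mathcal{K}^n\cup\{\emptyset\}$ by $\hat d_H(K,L)=d_H(K,L)$ if both non-empty, $\hat d_H(\emptyset,\emptyset)=0$, and $\hat d_H(K,\emptyset)=\hat d_H(\emptyset,K)=\max\{1,d_H(K,\{0\})\}$ for $K\ne\emptyset$. Then $\delta^H_\zeta(u,v)=\int_0^{\infty}\hat d_H(\{\zeta\circ u\ge s\},\{\zeta\circ v\ge s\})\,ds$, where $\{\zeta\circ u\ge s\}=\{x:\zeta(u(x))\ge s\}$ and $\zeta(+\infty):=0$. Epi-convergence $u_k\to u$: for every $x$, $\liminf_k u_k(x_k)\ge u(x)$ for all $x_k\to x$ and $\limsup_k u_k(x_k)\le u(x)$ for some $x_k\to x$. *)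

theory Defs
  imports "HOL-Analysis.Analysis" "HOL-Library.Extended_Real"
begin

text \<open>Functions u : R^n -> R \<union> {+\<infinity>} are modelled as ereal-valued functions never taking -\<infinity>.\<close>

definition proper_fun :: "('a \<Rightarrow> ereal) \<Rightarrow> bool" where
  "proper_fun u \<longleftrightarrow> (\<exists>x. u x \<noteq> \<infinity>) \<and> (\<forall>x. u x \<noteq> -\<infinity>)"

definition lsc_fun :: "('a::topological_space \<Rightarrow> ereal) \<Rightarrow> bool" where
  "lsc_fun u \<longleftrightarrow> (\<forall>x xs. xs \<longlonglongrightarrow> x \<longrightarrow> u x \<le> liminf (\<lambda>k. u (xs k)))"

definition convex_fun :: "('a::real_vector \<Rightarrow> ereal) \<Rightarrow> bool" where
  "convex_fun u \<longleftrightarrow> convex {(x, r::real). u x \<le> ereal r}"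

definition coercive_fun :: "('a::real_normed_vector \<Rightarrow> ereal) \<Rightarrow> bool" where
  "coercive_fun u \<longleftrightarrow> (u \<longlongrightarrow> \<infinity>) at_infinity"

definition Conv_coe :: "('a::euclidean_space \<Rightarrow> ereal) set" where
  "Conv_coe = {u. proper_fun u \<and> lsc_fun u \<and> convex_fun u \<and> coercive_fun u}"

definition hausdorff_dist :: "'a::metric_space set \<Rightarrow> 'a set \<Rightarrow> real" where
  "hausdorff_dist K L = max (SUP x\<in>K. infdist x L) (SUP y\<in>L. infdist y K)"

definition hat_dH :: "'a::real_normed_vector set \<Rightarrow> 'a set \<Rightarrow> real" where
  "hat_dH K L =
     (if K = {} \<and> L = {} then 0
      else if L = {} then max 1 (hausdorff_dist K {0})
      else if K = {} then max 1 (hausdorff_dist L {0})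
      else hausdorff_dist K L)"

definition zeta_ext :: "(real \<Rightarrow> real) \<Rightarrow> ereal \<Rightarrow> real" where
  "zeta_ext \<zeta> t = (if t = \<infinity> then 0 else \<zeta> (real_of_ereal t))"

definition superlevel :: "(real \<Rightarrow> real) \<Rightarrow> ('a \<Rightarrow> ereal) \<Rightarrow> real \<Rightarrow> 'a set" where
  "superlevel \<zeta> u s = {x. zeta_ext \<zeta> (u x) \<ge> s}"

definition delta_H :: "(real \<Rightarrow> real) \<Rightarrow> ('a::euclidean_space \<Rightarrow> ereal) \<Rightarrow> ('a \<Rightarrow> ereal) \<Rightarrow> ennreal" where
  "delta_H \<zeta> u v =
     (\<integral>\<^sup>+ s. ennreal (hat_dH (superlevel \<zeta> u s) (superlevel \<zeta> v s)) * indicator {0..} s \<partial>lborel)"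

definition epi_converges :: "(nat \<Rightarrow> 'a::topological_space \<Rightarrow> ereal) \<Rightarrow> ('a \<Rightarrow> ereal) \<Rightarrow> bool" where
  "epi_converges us u \<longleftrightarrow>
     (\<forall>x. (\<forall>xs. xs \<longlonglongrightarrow> x \<longrightarrow> u x \<le> liminf (\<lambda>k. us k (xs k))) \<and>
          (\<exists>xs. xs \<longlonglongrightarrow> x \<and> limsup (\<lambda>k. us k (xs k)) \<le> u x))"

end

theory Submission
  imports Defs
begin

text \<open>For every level \<open>t \<noteq> min u\<close> the sublevel sets \<open>{u\<^sub>k \<le> t}\<close> converge to \<open>{u \<le> t}\<close> in the
  Hausdorff metric: below \<open>min u\<close> they are eventually empty; above it, compactness and the liminf
  inequality put them eventually near \<open>{u \<le> t}\<close>, while recovery sequences reach every point of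
  \<open>{u \<le> t}\<close>, since by convexity \<open>{u < t}\<close> is dense in it. For \<open>s > 0\<close> the superlevel set
  \<open>{\<zeta> \<circ> u \<ge> s}\<close> is such a sublevel set, so the integrand of \<open>\<delta>\<close> tends to \<open>0\<close> for almost
  every \<open>s\<close>. Convexity and coercivity also bound the radius of \<open>{u\<^sub>k \<le> t}\<close> by \<open>R + C max 0 t\<close>
  uniformly in \<open>k\<close>; by the layer-cake formula this gives an integrable majorant, and dominated
  convergence concludes.\<close>

section \<open>Convex coercive functions and their sublevel sets\<close>

lemma Conv_coe_not_MInfty: "v \<in> Conv_coe \<Longrightarrow> v x \<noteq> -\<infinity>"
  by (auto simp: Conv_coe_def proper_fun_def)

lemma Conv_coe_convex_fun: "v \<in> Conv_coe \<Longrightarrow> convex_fun v"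
  by (simp add: Conv_coe_def)

lemma Conv_coe_lsc: "v \<in> Conv_coe \<Longrightarrow> xs \<longlonglongrightarrow> x \<Longrightarrow> v x \<le> liminf (\<lambda>k. v (xs k))"
  by (auto simp: Conv_coe_def lsc_fun_def)

lemma Conv_coe_finite_value:
  assumes "v \<in> Conv_coe"
  obtains y a where "v y = ereal a"
proof -
  obtain y where "v y \<noteq> \<infinity>"
    using assms by (auto simp: Conv_coe_def proper_fun_def)
  with Conv_coe_not_MInfty[OF assms, of y] show ?thesis
    by (cases "v y") (auto intro: that)
qed

lemma Conv_coe_sublevel_bounded:
  assumes "v \<in> Conv_coe"
  obtains R where "\<And>x. v x \<le> ereal t \<Longrightarrow> norm x \<le> R"
proof -
  have "eventually (\<lambda>x. ereal t < v x) at_infinity"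
    using assms by (auto simp: Conv_coe_def coercive_fun_def tendsto_PInfty)
  then obtain R where "\<And>x. R \<le> norm x \<Longrightarrow> ereal t < v x"
    by (auto simp: eventually_at_infinity)
  then show ?thesis
    by (intro that[of R]) (meson linorder_not_le order_less_imp_le)
qed

lemma Conv_coe_sublevel_compact:
  assumes "v \<in> Conv_coe"
  shows "compact {x. v x \<le> ereal t}"
proof -
  obtain R where "\<And>x. v x \<le> ereal t \<Longrightarrow> norm x \<le> R"
    using Conv_coe_sublevel_bounded[OF assms, of t] by blast
  then have "bounded {x. v x \<le> ereal t}"
    unfolding bounded_iff by blast
  moreover have "closed {x. v x \<le> ereal t}"
    unfolding closed_sequential_limits
  proof safe
    fix xs l assume xs: "\<forall>n. xs n \<in> {x. v x \<le> ereal t}" "xs \<longlonglongrightarrow> l"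
    have "v l \<le> liminf (\<lambda>n. v (xs n))"
      using Conv_coe_lsc[OF assms xs(2)] .
    also have "\<dots> \<le> ereal t"
      using xs(1) by (intro Liminf_le always_eventually) auto
    finally show "v l \<le> ereal t" .
  qed
  ultimately show ?thesis
    by (simp add: compact_eq_bounded_closed)
qed

lemma Conv_coe_attains_min:
  assumes "v \<in> Conv_coe"
  obtains x0 m where "v x0 = ereal m" "\<And>x. ereal m \<le> v x"
proof -
  obtain y a where y: "v y = ereal a"
    using Conv_coe_finite_value[OF assms] .
  define K where "K = {x. v x \<le> ereal a}"
  have yK: "y \<in> K"
    using y by (simp add: K_def)
  obtain zs where zs: "\<And>n. zs n \<in> v ` K" "zs \<longlonglongrightarrow> Inf (v ` K)"
    using Inf_as_limit[of "v ` K"] yK by blast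
  have "\<forall>n. \<exists>y. y \<in> K \<and> zs n = v y"
    using zs(1) by blast
  then obtain ys where ys: "\<And>n. ys n \<in> K" "\<And>n. zs n = v (ys n)"
    by metis
  have "seq_compact K"
    unfolding K_def by (intro compact_imp_seq_compact Conv_coe_sublevel_compact assms)
  then obtain w s where w: "w \<in> K" "strict_mono s" "(ys \<circ> s) \<longlonglongrightarrow> w"
    using ys(1) by (blast elim: seq_compactE)
  have "v w \<le> liminf (\<lambda>n. v ((ys \<circ> s) n))"
    by (rule Conv_coe_lsc[OF assms w(3)])
  also have "(\<lambda>n. v ((ys \<circ> s) n)) = zs \<circ> s"
    using ys(2) by auto
  also have "liminf (zs \<circ> s) = Inf (v ` K)"
    using LIMSEQ_subseq_LIMSEQ[OF zs(2) w(2)] by (simp add: lim_imp_Liminf)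
  finally have w_min_K: "v w \<le> Inf (v ` K)" .
  have w_min: "v w \<le> v x" for x
  proof (cases "x \<in> K")
    case True
    then show ?thesis
      using w_min_K by (meson INF_lower order_trans)
  next
    case False
    then have "ereal a < v x"
      by (simp add: K_def)
    moreover have "v w \<le> ereal a"
      using w(1) by (simp add: K_def)
    ultimately show ?thesis
      by simp
  qed
  have "v w \<noteq> \<infinity>"
    using w_min[of y] y by auto
  with Conv_coe_not_MInfty[OF assms, of w] obtain m where "v w = ereal m"
    by (cases "v w") auto
  with w_min show ?thesis
    using that by metis
qed

lemma convex_funD:
  assumes "convex_fun v" "v x \<le> ereal a" "v y \<le> ereal b" "0 \<le> l" "l \<le> 1"
  shows "v ((1 - l) *\<^sub>R x + l *\<^sub>R y) \<le> ereal ((1 - l) * a + l * b)"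
proof -
  have "(1 - l) *\<^sub>R (x, a) + l *\<^sub>R (y, b) \<in> {(x, r::real). v x \<le> ereal r}"
    using assms by (intro convexD) (auto simp: convex_fun_def)
  then show ?thesis
    by simp
qed

lemma convex_fun_sublevel_point_at_distance:
  fixes v :: "'a::real_normed_vector \<Rightarrow> ereal"
  assumes v: "convex_fun v" and y: "v y \<le> ereal c" and x: "v x \<le> ereal c"
    and \<rho>: "0 \<le> \<rho>" "\<rho> \<le> dist x y"
  obtains w where "v w \<le> ereal c" "dist w y = \<rho>"
proof -
  define l where "l = \<rho> / dist x y"
  have l: "0 \<le> l" "l \<le> 1" "l * dist x y = \<rho>"
    using \<rho> by (auto simp: l_def field_simps divide_le_eq_1)
  define w where "w = (1 - l) *\<^sub>R y + l *\<^sub>R x"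
  have "v w \<le> ereal ((1 - l) * c + l * c)"
    unfolding w_def using v y x l(1,2) by (rule convex_funD)
  then have "v w \<le> ereal c"
    by (simp add: algebra_simps)
  moreover have "w - y = l *\<^sub>R (x - y)"
    by (simp add: w_def algebra_simps)
  then have "dist w y = \<rho>"
    using l by (simp add: dist_norm)
  ultimately show ?thesis
    by (rule that)
qed

lemma convex_fun_sublevel_dist_bound:
  fixes v :: "'a::real_normed_vector \<Rightarrow> ereal"
  assumes v: "convex_fun v" and y: "v y \<le> ereal a"
    and R: "\<And>z. v z \<le> ereal (a + 1) \<Longrightarrow> norm z \<le> R" and x: "v x \<le> ereal t" and t: "a + 1 \<le> t"
  shows "norm (x - y) \<le> 2 * R * (t - a)"
proof -
  define l where "l = 1 / (t - a)"
  have l: "0 \<le> l" "l \<le> 1" "l * (t - a) = 1"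
    using t by (auto simp: l_def)
  define w where "w = (1 - l) *\<^sub>R y + l *\<^sub>R x"
  have "v w \<le> ereal ((1 - l) * a + l * t)"
    unfolding w_def using v y x l(1,2) by (rule convex_funD)
  also have "(1 - l) * a + l * t = a + 1"
    using l(3) by (simp add: algebra_simps)
  finally have "norm w \<le> R"
    by (rule R)
  moreover have "norm y \<le> R"
    using y by (intro R) (simp add: order_trans)
  moreover have "w - y = l *\<^sub>R (x - y)"
    by (simp add: w_def algebra_simps)
  ultimately have "l * norm (x - y) \<le> 2 * R"
    using l(1) norm_triangle_ineq4[of w y] by simp
  then show ?thesis
    using t by (simp add: l_def field_simps)
qed

lemma convex_fun_sublevel_affine_bound:
  fixes v :: "'a::real_normed_vector \<Rightarrow> ereal"
  assumes v: "convex_fun v" and y: "v y \<le> ereal a"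
    and R: "\<And>z. v z \<le> ereal (a + 1) \<Longrightarrow> norm z \<le> R" and x: "v x \<le> ereal t"
  shows "norm x \<le> R * (1 + 2 * \<bar>a\<bar>) + 2 * R * max 0 t"
proof -
  have "norm y \<le> R"
    using y by (intro R) (simp add: order_trans)
  then have R0: "0 \<le> R"
    using norm_ge_zero order_trans by blast
  have "norm x \<le> R + 2 * R * max 0 (t - a)"
  proof (cases "t \<le> a + 1")
    case True
    then show ?thesis
      using R[of x] x R0 by (simp add: order_trans)
  next
    case False
    then have "norm (x - y) \<le> 2 * R * (t - a)"
      using convex_fun_sublevel_dist_bound[OF v y R x] by simp
    then show ?thesis
      using norm_triangle_ineq2[of x y] \<open>norm y \<le> R\<close> False by simp
  qed
  also have "\<dots> \<le> R * (1 + 2 * \<bar>a\<bar>) + 2 * R * max 0 t"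
  proof -
    have "2 * R * max 0 (t - a) \<le> 2 * R * (\<bar>a\<bar> + max 0 t)"
      using R0 by (intro mult_left_mono) auto
    then show ?thesis
      by (simp add: algebra_simps)
  qed
  finally show ?thesis .
qed

lemma Conv_coe_sublevel_affine_bound:
  assumes "v \<in> Conv_coe"
  obtains R C where "0 \<le> R" "0 \<le> C" "\<And>x t. v x \<le> ereal t \<Longrightarrow> norm x \<le> R + C * max 0 t"
proof -
  obtain y a where y: "v y = ereal a"
    using Conv_coe_finite_value[OF assms] .
  obtain R where R: "\<And>z. v z \<le> ereal (a + 1) \<Longrightarrow> norm z \<le> R"
    using Conv_coe_sublevel_bounded[OF assms, of "a + 1"] by blast
  have "norm y \<le> R"
    using R[of y] y by simp
  then have "0 \<le> R"
    using norm_ge_zero order_trans by blast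
  moreover have "norm x \<le> R * (1 + 2 * \<bar>a\<bar>) + 2 * R * max 0 t" if "v x \<le> ereal t" for x t
    using convex_fun_sublevel_affine_bound[OF Conv_coe_convex_fun[OF assms], of y a R x t] y R that
    by simp
  ultimately show ?thesis
    by (intro that[of "R * (1 + 2 * \<bar>a\<bar>)" "2 * R"]) auto
qed

lemma convex_fun_sublevel_approx:
  fixes v :: "'a::real_normed_vector \<Rightarrow> ereal"
  assumes v: "convex_fun v" and x0: "v x0 < ereal t" and y: "v y \<le> ereal t" and e: "0 < e"
  obtains q where "v q < ereal t" "dist q y < e"
proof -
  obtain a where a: "v x0 \<le> ereal a" "a < t"
    using ereal_dense2[OF x0] by (auto intro: less_imp_le)
  define l where "l = min 1 (e / (norm (y - x0) + 1))"
  have pos: "0 < norm (y - x0) + 1"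
    by (simp add: add_nonneg_pos)
  have le: "l \<le> e / (norm (y - x0) + 1)"
    by (simp add: l_def)
  have l: "0 < l" "l \<le> 1" "l * (norm (y - x0) + 1) \<le> e"
    using e pos le pos_le_divide_eq[OF pos] by (auto simp: l_def)
  define q where "q = (1 - l) *\<^sub>R y + l *\<^sub>R x0"
  have "v q \<le> ereal ((1 - l) * t + l * a)"
    unfolding q_def using v y a(1) l(1,2) by (intro convex_funD) auto
  also have "(1 - l) * t + l * a < t"
    using l(1) a(2) by (simp add: algebra_simps)
  finally have "v q < ereal t"
    by simp
  moreover have "q - y = l *\<^sub>R (x0 - y)"
    by (simp add: q_def algebra_simps)
  then have "dist q y = l * norm (y - x0)"
    using l by (simp add: dist_norm norm_minus_commute)
  then have "dist q y < e"
    using l by (simp add: algebra_simps)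
  ultimately show ?thesis
    by (rule that)
qed

lemma Conv_coe_sublevel_finite_net:
  assumes v: "v \<in> Conv_coe" and x0: "v x0 < ereal t" and e: "0 < e"
  obtains Q where "finite Q" "\<And>q. q \<in> Q \<Longrightarrow> v q < ereal t"
    "\<And>y. v y \<le> ereal t \<Longrightarrow> \<exists>q\<in>Q. dist q y < e"
proof -
  have "{y. v y \<le> ereal t} \<subseteq> (\<Union>q\<in>{q. v q < ereal t}. ball q e)"
  proof
    fix y assume "y \<in> {y. v y \<le> ereal t}"
    then obtain q where "v q < ereal t" "dist q y < e"
      using convex_fun_sublevel_approx[OF Conv_coe_convex_fun[OF v] x0 _ e] by blast
    then show "y \<in> (\<Union>q\<in>{q. v q < ereal t}. ball q e)"
      by auto
  qed
  then obtain Q where "Q \<subseteq> {q. v q < ereal t}" "finite Q" "{y. v y \<le> ereal t} \<subseteq> (\<Union>q\<in>Q. ball q e)"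
    using compactE_image[OF Conv_coe_sublevel_compact[OF v]] by (metis open_ball)
  then show ?thesis
    using that by fastforce
qed

section \<open>Sublevel sets under epi-convergence\<close>

definition affine_sublevel_bound :: "real \<Rightarrow> real \<Rightarrow> real \<Rightarrow> ('a::real_normed_vector \<Rightarrow> ereal) \<Rightarrow> bool" where
  "affine_sublevel_bound L R C v \<longleftrightarrow> (\<forall>x t. v x \<le> ereal t \<longrightarrow> L < t \<and> norm x \<le> R + C * max 0 t)"

lemma affine_sublevel_bound_not_MInfty:
  assumes "affine_sublevel_bound L R C v"
  shows "v x \<noteq> -\<infinity>"
  using assms[unfolded affine_sublevel_bound_def, rule_format, of x L] by auto

lemma affine_sublevel_boundI:
  assumes "\<And>x. ereal L < v x" and "\<And>x t. v x \<le> ereal t \<Longrightarrow> norm x \<le> R + C * max 0 t"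
  shows "affine_sublevel_bound L R C v"
  unfolding affine_sublevel_bound_def
proof safe
  fix x t assume x: "v x \<le> ereal t"
  with assms(1)[of x] have "ereal L < ereal t"
    by (rule less_le_trans)
  then show "L < t"
    by simp
  show "norm x \<le> R + C * max 0 t"
    using assms(2) x .
qed

lemma affine_sublevel_bound_mono:
  assumes "affine_sublevel_bound L R C v" "R \<le> R'" "C \<le> C'"
  shows "affine_sublevel_bound L R' C' v"
proof -
  have "R + C * max 0 t \<le> R' + C' * max 0 t" for t
    using assms(2,3) by (intro add_mono mult_right_mono) auto
  with assms(1) show ?thesis
    unfolding affine_sublevel_bound_def by (meson order_trans)
qed

lemma frequently_sequentially_subseq:
  assumes "\<exists>\<^sub>F k in sequentially. P k"
  obtains r :: "nat \<Rightarrow> nat" where "strict_mono r" "\<And>j. P (r j)"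
proof -
  have "infinite {k. P k}"
    using assms by (simp add: frequently_sequentially infinite_nat_iff_unbounded_le)
  then show ?thesis
    using infinite_enumerate that by blast
qed

locale epi_convergent_Conv_coe =
  fixes us :: "nat \<Rightarrow> 'a::euclidean_space \<Rightarrow> ereal" and u :: "'a \<Rightarrow> ereal"
  assumes us_Conv_coe: "\<And>k. us k \<in> Conv_coe" and u_Conv_coe: "u \<in> Conv_coe"
    and epi: "epi_converges us u"
begin

lemma liminf_subseq_ge:
  assumes r: "strict_mono r" and y: "y \<longlonglongrightarrow> x"
  shows "u x \<le> liminf (\<lambda>j. us (r j) (y j))"
proof -
  define z where "z k = (if k \<in> range r then y (inv r k) else x)" for k
  have inv_r: "inv r (r j) = j" for j
    using strict_mono_imp_inj_on[OF r] by (simp add: inv_f_f)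
  have "z \<longlonglongrightarrow> x"
  proof (rule tendstoI)
    fix e :: real assume "0 < e"
    then obtain J where J: "\<And>j. J \<le> j \<Longrightarrow> dist (y j) x < e"
      using y by (auto simp: tendsto_iff eventually_sequentially)
    have "dist (z k) x < e" if "r J \<le> k" for k
    proof (cases "k \<in> range r")
      case True
      then obtain j where "k = r j"
        by auto
      with that have "J \<le> j"
        using strict_mono_less_eq[OF r] by auto
      then show ?thesis
        using J \<open>k = r j\<close> inv_r by (simp add: z_def)
    qed (use \<open>0 < e\<close> in \<open>simp add: z_def\<close>)
    then show "eventually (\<lambda>k. dist (z k) x < e) sequentially"
      by (auto simp: eventually_sequentially)
  qed
  then have "u x \<le> liminf (\<lambda>k. us k (z k))"
    using epi by (auto simp: epi_converges_def)
  also have "\<dots> \<le> liminf ((\<lambda>k. us k (z k)) \<circ> r)"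
    by (rule liminf_subseq_mono[OF r])
  also have "(\<lambda>k. us k (z k)) \<circ> r = (\<lambda>j. us (r j) (y j))"
    by (auto simp: z_def inv_r)
  finally show ?thesis .
qed

lemma recovery_sequence_below:
  assumes "u x < ereal c"
  obtains xs where "xs \<longlonglongrightarrow> x" "eventually (\<lambda>k. us k (xs k) < ereal c) sequentially"
proof -
  obtain xs where "xs \<longlonglongrightarrow> x" "limsup (\<lambda>k. us k (xs k)) \<le> u x"
    using epi by (auto simp: epi_converges_def)
  with assms show ?thesis
    by (intro that[of xs]) (auto intro: Limsup_lessD)
qed

lemma frequently_sublevel_cluster:
  assumes "\<exists>\<^sub>F k in sequentially. \<exists>x. P k x \<and> norm x \<le> B \<and> us k x \<le> ereal t"
  obtains r y w where "strict_mono r" "y \<longlonglongrightarrow> w" "\<And>j. P (r j) (y j)" "u w \<le> ereal t"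
proof -
  obtain r0 :: "nat \<Rightarrow> nat" where r0: "strict_mono r0" "\<And>j. \<exists>x. P (r0 j) x \<and> norm x \<le> B \<and> us (r0 j) x \<le> ereal t"
    using frequently_sequentially_subseq[OF assms] by blast
  then obtain y0 where y0: "\<And>j. P (r0 j) (y0 j)" "\<And>j. norm (y0 j) \<le> B" "\<And>j. us (r0 j) (y0 j) \<le> ereal t"
    by metis
  have "\<forall>j. y0 j \<in> cball 0 B"
    using y0(2) by simp
  then obtain w s where s: "strict_mono s" "(y0 \<circ> s) \<longlonglongrightarrow> w"
    using compact_imp_seq_compact[OF compact_cball] by (blast elim: seq_compactE)
  have r: "strict_mono (r0 \<circ> s)"
    using r0(1) s(1) by (rule strict_mono_o)
  have "u w \<le> liminf (\<lambda>j. us ((r0 \<circ> s) j) ((y0 \<circ> s) j))"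
    by (rule liminf_subseq_ge[OF r s(2)])
  also have "\<dots> \<le> ereal t"
    using y0(3) by (intro Liminf_le always_eventually) auto
  finally show ?thesis
    using that[OF r s(2)] y0(1) by simp
qed

text \<open>By convexity, a far-away point of \<open>{us k \<le> c}\<close> yields one at distance exactly \<open>\<rho>\<close> from
  \<open>xs k\<close>, where \<open>xs\<close> is a recovery sequence for \<open>y\<close>; a cluster point of these lies in \<open>{u \<le> c}\<close>
  at distance \<open>\<rho>\<close> from \<open>y\<close>, which exceeds the radius of that set.\<close>
lemma sublevels_eventually_bounded:
  assumes "u y < ereal c"
  obtains R where "eventually (\<lambda>k. \<forall>x. us k x \<le> ereal c \<longrightarrow> norm x \<le> R) sequentially"
proof -
  obtain R0 where R0: "\<And>x. u x \<le> ereal c \<Longrightarrow> norm x \<le> R0"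
    using Conv_coe_sublevel_bounded[OF u_Conv_coe, of c] by blast
  obtain xs where xs: "xs \<longlonglongrightarrow> y" "eventually (\<lambda>k. us k (xs k) < ereal c) sequentially"
    using recovery_sequence_below[OF assms] by blast
  define \<rho> where "\<rho> = max R0 0 + norm y + 1"
  define B where "B = norm y + 1 + \<rho>"
  have near: "eventually (\<lambda>k. us k (xs k) < ereal c \<and> dist (xs k) y < 1) sequentially"
    using xs by (auto simp: tendsto_iff intro: eventually_conj)
  show ?thesis
  proof (rule that, rule ccontr)
    assume "\<not> eventually (\<lambda>k. \<forall>x. us k x \<le> ereal c \<longrightarrow> norm x \<le> B) sequentially"
    then have "\<exists>\<^sub>F k in sequentially. (\<exists>x. us k x \<le> ereal c \<and> B < norm x) \<and>
        us k (xs k) < ereal c \<and> dist (xs k) y < 1"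
      using near by (auto simp: not_eventually not_le intro: frequently_eventually_frequently)
    then have "\<exists>\<^sub>F k in sequentially. \<exists>w. dist w (xs k) = \<rho> \<and> norm w \<le> B \<and> us k w \<le> ereal c"
    proof (rule frequently_elim1, elim conjE exE)
      fix k x
      assume x: "us k x \<le> ereal c" "B < norm x" and xk: "us k (xs k) < ereal c" "dist (xs k) y < 1"
      have nxk: "norm (xs k) < norm y + 1"
        using xk(2) norm_triangle_ineq2[of "xs k" y] by (simp add: dist_norm)
      have "0 \<le> \<rho>"
        unfolding \<rho>_def by (intro add_nonneg_nonneg) auto
      moreover have "\<rho> \<le> dist x (xs k)"
        using x(2) nxk norm_triangle_ineq2[of x "xs k"] unfolding B_def dist_norm by linarith
      moreover have "us k (xs k) \<le> ereal c"
        using xk(1) by simp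
      ultimately obtain w where w: "us k w \<le> ereal c" "dist w (xs k) = \<rho>"
        using convex_fun_sublevel_point_at_distance[OF Conv_coe_convex_fun[OF us_Conv_coe] _ x(1)]
        by blast
      moreover have "norm w \<le> B"
        using norm_triangle_ineq2[of w "xs k"] nxk w(2) unfolding B_def dist_norm by linarith
      ultimately show "\<exists>w. dist w (xs k) = \<rho> \<and> norm w \<le> B \<and> us k w \<le> ereal c"
        by blast
    qed
    then obtain r ws w where r: "strict_mono r" "ws \<longlonglongrightarrow> w" "\<And>j. dist (ws j) (xs (r j)) = \<rho>"
      and uw: "u w \<le> ereal c"
      by (rule frequently_sublevel_cluster[where P = "\<lambda>k w. dist w (xs k) = \<rho>"]) blast
    have "(\<lambda>j. dist (ws j) (xs (r j))) \<longlonglongrightarrow> dist w y"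
      using LIMSEQ_subseq_LIMSEQ[OF xs(1) r(1)] r(2) by (intro tendsto_dist) (auto simp: o_def)
    then have "dist w y = \<rho>"
      using r(3) by (simp add: LIMSEQ_const_iff)
    moreover have "dist w y \<le> norm w + norm y"
      by (simp add: dist_norm norm_triangle_ineq4)
    ultimately show False
      using R0[OF uw] unfolding \<rho>_def by linarith
  qed
qed

lemma sublevels_eventually_empty:
  assumes below: "\<And>x. ereal t < u x"
  shows "eventually (\<lambda>k. \<forall>x. \<not> us k x \<le> ereal t) sequentially"
proof (rule ccontr)
  assume not_empty: "\<not> ?thesis"
  obtain y a where y: "u y = ereal a"
    using Conv_coe_finite_value[OF u_Conv_coe] .
  have "t < a"
    using below[of y] y by simp
  obtain R where R: "eventually (\<lambda>k. \<forall>x. us k x \<le> ereal (a + 1) \<longrightarrow> norm x \<le> R) sequentially"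
    using sublevels_eventually_bounded[of y "a + 1"] y by auto
  have "\<exists>\<^sub>F k in sequentially. \<exists>x. True \<and> norm x \<le> R \<and> us k x \<le> ereal t"
    using frequently_eventually_frequently[OF not_empty[unfolded not_eventually] R]
  proof (rule frequently_elim1, elim conjE exE)
    fix k x assume "\<not> (\<forall>x. \<not> us k x \<le> ereal t)" "\<forall>x. us k x \<le> ereal (a + 1) \<longrightarrow> norm x \<le> R"
    then obtain x where x: "us k x \<le> ereal t" and R: "us k x \<le> ereal (a + 1) \<Longrightarrow> norm x \<le> R"
      by blast
    have "ereal t \<le> ereal (a + 1)"
      using \<open>t < a\<close> by simp
    with x R show "\<exists>x. True \<and> norm x \<le> R \<and> us k x \<le> ereal t"
      using order.trans by blast
  qed
  then obtain w where "u w \<le> ereal t"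
    by (rule frequently_sublevel_cluster) blast
  with below[of w] show False
    by simp
qed

lemma sublevels_eventually_norm_bound:
  obtains R C where "eventually (\<lambda>k. \<forall>x t. us k x \<le> ereal t \<longrightarrow> norm x \<le> R + C * max 0 t) sequentially"
proof -
  obtain y a where y: "u y = ereal a"
    using Conv_coe_finite_value[OF u_Conv_coe] .
  obtain xs where xs: "eventually (\<lambda>k. us k (xs k) < ereal (a + 1)) sequentially"
    using recovery_sequence_below[of y "a + 1"] y by auto
  obtain R where R: "eventually (\<lambda>k. \<forall>x. us k x \<le> ereal (a + 1 + 1) \<longrightarrow> norm x \<le> R) sequentially"
    using sublevels_eventually_bounded[of y "a + 1 + 1"] y by auto
  have "eventually (\<lambda>k. \<forall>x t. us k x \<le> ereal t \<longrightarrow>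
      norm x \<le> R * (1 + 2 * \<bar>a + 1\<bar>) + 2 * R * max 0 t) sequentially"
    using xs R
  proof eventually_elim
    case (elim k)
    have "us k (xs k) \<le> ereal (a + 1)"
      using elim(1) by simp
    moreover have "\<And>z. us k z \<le> ereal (a + 1 + 1) \<Longrightarrow> norm z \<le> R"
      using elim(2) by blast
    ultimately show ?case
      using convex_fun_sublevel_affine_bound[OF Conv_coe_convex_fun[OF us_Conv_coe], of k "xs k" "a + 1" R]
      by blast
  qed
  then show ?thesis
    by (rule that)
qed

lemma sublevels_eventually_affinely_bounded:
  obtains L R C where "0 \<le> R" "0 \<le> C" "affine_sublevel_bound L R C u"
    "eventually (\<lambda>k. affine_sublevel_bound L R C (us k)) sequentially"
proof -
  obtain x0 m where "u x0 = ereal m" and min: "\<And>x. ereal m \<le> u x"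
    using Conv_coe_attains_min[OF u_Conv_coe] by blast
  then have below: "ereal (m - 1) < u x" for x
    using less_le_trans[OF _ min[of x], of "ereal (m - 1)"] by simp
  obtain R1 C1 where R1: "0 \<le> R1" "0 \<le> C1" "\<And>x t. u x \<le> ereal t \<Longrightarrow> norm x \<le> R1 + C1 * max 0 t"
    using Conv_coe_sublevel_affine_bound[OF u_Conv_coe] by blast
  obtain R2 C2 where R2: "eventually (\<lambda>k. \<forall>x t. us k x \<le> ereal t \<longrightarrow> norm x \<le> R2 + C2 * max 0 t) sequentially"
    by (rule sublevels_eventually_norm_bound)
  have "affine_sublevel_bound (m - 1) R1 C1 u"
    using below R1(3) by (rule affine_sublevel_boundI)
  moreover have "eventually (\<lambda>k. affine_sublevel_bound (m - 1) R2 C2 (us k)) sequentially"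
    using sublevels_eventually_empty[OF below] R2
    by eventually_elim (auto simp: not_le intro: affine_sublevel_boundI)
  ultimately show ?thesis
    using R1(1,2)
    by (intro that[of "max R1 R2" "max C1 C2" "m - 1"])
      (auto elim!: eventually_mono intro: affine_sublevel_bound_mono)
qed

lemma sublevels_eventually_near_limit_sublevel:
  assumes "u y < ereal t" "0 < e"
  shows "eventually (\<lambda>k. \<forall>x. us k x \<le> ereal t \<longrightarrow> (\<exists>z. u z \<le> ereal t \<and> dist x z < e)) sequentially"
proof (rule ccontr)
  obtain R where R: "eventually (\<lambda>k. \<forall>x. us k x \<le> ereal t \<longrightarrow> norm x \<le> R) sequentially"
    using sublevels_eventually_bounded[OF assms(1)] .
  assume "\<not> ?thesis"
  then have "\<exists>\<^sub>F k in sequentially. \<exists>x. (\<forall>z. u z \<le> ereal t \<longrightarrow> e \<le> dist x z) \<and> norm x \<le> R \<and> us k x \<le> ereal t"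
    using R unfolding not_eventually
    by (rule frequently_eventually_frequently[THEN frequently_elim1]) (auto simp: not_less)
  then obtain xs w where "xs \<longlonglongrightarrow> w" "\<And>j. \<forall>z. u z \<le> ereal t \<longrightarrow> e \<le> dist (xs j) z" "u w \<le> ereal t"
    by (rule frequently_sublevel_cluster) blast
  then have "\<And>j. e \<le> dist (xs j) w" "eventually (\<lambda>j. dist (xs j) w < e) sequentially"
    using assms(2) by (auto simp: tendsto_iff)
  then show False
    by (auto simp: not_le[symmetric] dest: eventually_happens)
qed

lemma limit_sublevel_eventually_near_sublevels:
  assumes "u x0 < ereal t" "0 < e"
  shows "eventually (\<lambda>k. \<forall>y. u y \<le> ereal t \<longrightarrow> (\<exists>x. us k x \<le> ereal t \<and> dist x y < e)) sequentially"
proof -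
  obtain Q where Q: "finite Q" "\<And>q. q \<in> Q \<Longrightarrow> u q < ereal t"
    "\<And>y. u y \<le> ereal t \<Longrightarrow> \<exists>q\<in>Q. dist q y < e / 2"
    using Conv_coe_sublevel_finite_net[OF u_Conv_coe assms(1), of "e / 2"] assms(2) by auto
  have "\<forall>q\<in>Q. \<exists>xs. eventually (\<lambda>k. us k (xs k) < ereal t \<and> dist (xs k) q < e / 2) sequentially"
  proof
    fix q assume q: "q \<in> Q"
    obtain xs where "xs \<longlonglongrightarrow> q" "eventually (\<lambda>k. us k (xs k) < ereal t) sequentially"
      using recovery_sequence_below[OF Q(2)[OF q]] by blast
    then have "eventually (\<lambda>k. us k (xs k) < ereal t \<and> dist (xs k) q < e / 2) sequentially"
      using tendstoD[of xs q sequentially "e / 2"] assms(2) by (auto intro: eventually_conj)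
    then show "\<exists>xs. eventually (\<lambda>k. us k (xs k) < ereal t \<and> dist (xs k) q < e / 2) sequentially"
      by blast
  qed
  then obtain X where "\<And>q. q \<in> Q \<Longrightarrow> eventually (\<lambda>k. us k (X q k) < ereal t \<and> dist (X q k) q < e / 2) sequentially"
    by metis
  then have "eventually (\<lambda>k. \<forall>q\<in>Q. us k (X q k) < ereal t \<and> dist (X q k) q < e / 2) sequentially"
    using Q(1) by (simp add: eventually_ball_finite)
  then show ?thesis
  proof eventually_elim
    case (elim k)
    show ?case
    proof safe
      fix y assume "u y \<le> ereal t"
      then obtain q where q: "q \<in> Q" "dist q y < e / 2"
        using Q(3) by blast
      have "dist (X q k) y \<le> dist (X q k) q + dist q y"
        by (rule dist_triangle)
      with elim q show "\<exists>x. us k x \<le> ereal t \<and> dist x y < e"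
        by (intro exI[of _ "X q k"]) auto
    qed
  qed
qed

end

section \<open>Hausdorff distance of sublevel sets\<close>

lemma hausdorff_dist_le:
  assumes "K \<noteq> {}" "L \<noteq> {}"
    and "\<And>x. x \<in> K \<Longrightarrow> \<exists>y\<in>L. dist x y \<le> e" and "\<And>y. y \<in> L \<Longrightarrow> \<exists>x\<in>K. dist y x \<le> e"
  shows "hausdorff_dist K L \<le> e"
proof -
  have "(SUP x\<in>K. infdist x L) \<le> e"
  proof (rule cSUP_least[OF assms(1)])
    fix x assume "x \<in> K"
    then obtain y where "y \<in> L" "dist x y \<le> e"
      using assms(3) by blast
    then show "infdist x L \<le> e"
      using infdist_le[of y L x] by linarith
  qed
  moreover have "(SUP y\<in>L. infdist y K) \<le> e"
  proof (rule cSUP_least[OF assms(2)])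
    fix y assume "y \<in> L"
    then obtain x where "x \<in> K" "dist y x \<le> e"
      using assms(4) by blast
    then show "infdist y K \<le> e"
      using infdist_le[of x K y] by linarith
  qed
  ultimately show ?thesis
    by (simp add: hausdorff_dist_def)
qed

lemma hat_dH_empty [simp]: "hat_dH {} {} = 0"
  by (simp add: hat_dH_def)

lemma hat_dH_nonempty: "K \<noteq> {} \<Longrightarrow> L \<noteq> {} \<Longrightarrow> hat_dH K L = hausdorff_dist K L"
  by (simp add: hat_dH_def)

lemma hat_dH_le_norm_bound:
  fixes K L :: "'a::real_normed_vector set"
  assumes R: "0 \<le> R" and K: "\<And>x. x \<in> K \<Longrightarrow> norm x \<le> R" and L: "\<And>x. x \<in> L \<Longrightarrow> norm x \<le> R"
  shows "hat_dH K L \<le> 1 + 2 * R"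
proof -
  have to_0: "hausdorff_dist A {0} \<le> R" if "A \<noteq> {}" "\<And>x. x \<in> A \<Longrightarrow> norm x \<le> R" for A :: "'a set"
    using that by (intro hausdorff_dist_le) (auto simp: dist_norm)
  show ?thesis
  proof (cases "K = {}"; cases "L = {}")
    assume "K \<noteq> {}" "L \<noteq> {}"
    have "dist x y \<le> 2 * R \<and> dist y x \<le> 2 * R" if "x \<in> K" "y \<in> L" for x y
      using K[OF that(1)] L[OF that(2)] norm_triangle_ineq4[of x y] by (simp add: dist_norm norm_minus_commute)
    with \<open>K \<noteq> {}\<close> \<open>L \<noteq> {}\<close> have "hausdorff_dist K L \<le> 2 * R"
      by (intro hausdorff_dist_le) blast+
    then show ?thesis
      using \<open>K \<noteq> {}\<close> \<open>L \<noteq> {}\<close> R by (simp add: hat_dH_nonempty)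
  qed (use to_0[of K] to_0[of L] K L R in \<open>auto simp: hat_dH_def\<close>)
qed

lemma ennreal_tendsto_0I:
  assumes "\<And>e. 0 < e \<Longrightarrow> eventually (\<lambda>k. f k \<le> e) F"
  shows "((\<lambda>k. ennreal (f k)) \<longlongrightarrow> 0) F"
proof -
  have "((\<lambda>k. max 0 (f k)) \<longlongrightarrow> 0) F"
  proof (rule tendstoI)
    fix e :: real assume "0 < e"
    then have "eventually (\<lambda>k. f k \<le> e / 2) F"
      using assms[of "e / 2"] by simp
    then show "eventually (\<lambda>k. dist (max 0 (f k)) 0 < e) F"
      by eventually_elim (use \<open>0 < e\<close> in auto)
  qed
  then show ?thesis
    using tendsto_ennrealI[of "\<lambda>k. max 0 (f k)" 0 F] by (simp add: ennreal_max_0)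
qed

context epi_convergent_Conv_coe
begin

lemma sublevels_hat_dH_eventually_le:
  assumes "u x0 < ereal t" "0 < e"
  shows "eventually (\<lambda>k. hat_dH {x. us k x \<le> ereal t} {x. u x \<le> ereal t} \<le> e) sequentially"
  using sublevels_eventually_near_limit_sublevel[OF assms] limit_sublevel_eventually_near_sublevels[OF assms]
proof eventually_elim
  case (elim k)
  have ne: "{x. u x \<le> ereal t} \<noteq> {}"
    using assms(1) by (auto intro: less_imp_le)
  then have ne_k: "{x. us k x \<le> ereal t} \<noteq> {}"
    using elim(2) by blast
  have "hausdorff_dist {x. us k x \<le> ereal t} {x. u x \<le> ereal t} \<le> e"
    using elim by (intro hausdorff_dist_le[OF ne_k ne]) (force simp: dist_commute intro: less_imp_le)+
  with ne ne_k show ?case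
    by (simp add: hat_dH_nonempty)
qed

lemma sublevels_hat_dH_eventually_0:
  assumes "\<And>x. ereal t < u x"
  shows "eventually (\<lambda>k. hat_dH {x. us k x \<le> ereal t} {x. u x \<le> ereal t} = 0) sequentially"
  using sublevels_eventually_empty[OF assms]
  by eventually_elim (use assms in \<open>auto simp: hat_dH_def not_le\<close>)

text \<open>The level \<open>min u\<close> itself must be excluded: \<open>{u \<le> min u}\<close> is nonempty, whereas the
  sublevel sets of the \<open>us k\<close> at that level may all be empty.\<close>
lemma sublevels_hat_dH_tendsto_0:
  assumes x0: "u x0 = ereal m" and min: "\<And>x. ereal m \<le> u x" and "\<tau> \<noteq> m"
  shows "(\<lambda>k. ennreal (hat_dH {x. us k x \<le> ereal \<tau>} {x. u x \<le> ereal \<tau>})) \<longlonglongrightarrow> 0"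
proof (cases "\<tau> < m")
  case True
  then have "ereal \<tau> < u x" for x
    using less_le_trans[OF _ min[of x], of "ereal \<tau>"] by simp
  then have "eventually (\<lambda>k. hat_dH {x. us k x \<le> ereal \<tau>} {x. u x \<le> ereal \<tau>} = 0) sequentially"
    by (rule sublevels_hat_dH_eventually_0)
  then show ?thesis
    by (intro tendsto_eventually) (auto elim: eventually_mono)
next
  case False
  with x0 \<open>\<tau> \<noteq> m\<close> have "u x0 < ereal \<tau>"
    by simp
  then show ?thesis
    by (intro ennreal_tendsto_0I sublevels_hat_dH_eventually_le)
qed

end

section \<open>Superlevel sets of the weight\<close>

lemma superlevel_eq_sublevel:
  assumes "0 < s" "\<And>t. s \<le> \<zeta> t \<longleftrightarrow> t \<le> \<tau>" "\<And>x. v x \<noteq> -\<infinity>"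
  shows "superlevel \<zeta> v s = {x. v x \<le> ereal \<tau>}"
proof -
  have "s \<le> zeta_ext \<zeta> (v x) \<longleftrightarrow> v x \<le> ereal \<tau>" for x
    using assms by (cases "v x") (auto simp: zeta_ext_def)
  then show ?thesis
    by (simp add: superlevel_def)
qed

lemma superlevel_empty:
  assumes "0 < s" "\<And>t. \<zeta> t < s"
  shows "superlevel \<zeta> v s = {}"
  using assms by (auto simp: superlevel_def zeta_ext_def not_le)

definition under_graph :: "(real \<Rightarrow> real) \<Rightarrow> (real \<times> real) set" where
  "under_graph \<zeta> = {(s, t). 0 < s \<and> 0 \<le> t \<and> s \<le> \<zeta> t}"

definition level_length :: "(real \<Rightarrow> real) \<Rightarrow> real \<Rightarrow> ennreal" where
  "level_length \<zeta> s = (\<integral>\<^sup>+ t. indicator (under_graph \<zeta>) (s, t) \<partial>lborel)"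

lemma level_length_eq:
  assumes "0 < s" "\<And>t. s \<le> \<zeta> t \<longleftrightarrow> t \<le> \<tau>"
  shows "level_length \<zeta> s = ennreal (max 0 \<tau>)"
proof -
  have "(\<lambda>t. indicator (under_graph \<zeta>) (s, t) :: ennreal) = indicator {0..\<tau>}"
    using assms by (auto simp: under_graph_def indicator_def)
  then show ?thesis
    by (cases "0 \<le> \<tau>") (auto simp: level_length_def)
qed

locale decreasing_weight =
  fixes \<zeta> :: "real \<Rightarrow> real"
  assumes continuous: "continuous_on UNIV \<zeta>" and nonneg: "\<And>t. 0 \<le> \<zeta> t"
    and decreasing: "antimono \<zeta>"
    and integrable: "(\<integral>\<^sup>+ t. ennreal (\<zeta> t) * indicator {0..} t \<partial>lborel) < \<infinity>"
begin

lemma exists_below: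
  assumes s: "0 < s"
  shows "\<exists>t. \<zeta> t < s"
proof (rule ccontr)
  assume "\<not> ?thesis"
  then have above: "\<And>t. s \<le> \<zeta> t"
    by (simp add: not_less)
  obtain c where c: "(\<integral>\<^sup>+ t. ennreal (\<zeta> t) * indicator {0..} t \<partial>lborel) = ennreal c" "0 \<le> c"
    using integrable by (cases "\<integral>\<^sup>+ t. ennreal (\<zeta> t) * indicator {0..} t \<partial>lborel") (auto simp: top_unique)
  have "s * real n \<le> c" for n :: nat
  proof -
    have "ennreal (s * real n) = (\<integral>\<^sup>+ t. ennreal s * indicator {0..real n} t \<partial>lborel)"
      using s by (simp add: ennreal_mult nn_integral_cmult_indicator)
    also have "\<dots> \<le> (\<integral>\<^sup>+ t. ennreal (\<zeta> t) * indicator {0..} t \<partial>lborel)"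
      by (intro nn_integral_mono) (auto simp: above ennreal_leI split: split_indicator)
    finally show ?thesis
      using c by simp
  qed
  moreover obtain n :: nat where "c / s < real n"
    using reals_Archimedean2 by blast
  ultimately show False
    using s by (simp add: field_simps) (metis not_le)
qed

lemma threshold_cases:
  assumes s: "0 < s"
  obtains "\<And>t. \<zeta> t < s" | \<tau> where "\<And>t. s \<le> \<zeta> t \<longleftrightarrow> t \<le> \<tau>"
proof (cases "\<exists>t. s \<le> \<zeta> t")
  case False
  then show ?thesis
    using that(1) by (auto simp: not_le)
next
  case True
  define A where "A = {t. s \<le> \<zeta> t}"
  obtain t0 where t0: "\<zeta> t0 < s"
    using exists_below[OF s] by blast
  have "a \<le> t0" if "a \<in> A" for a
  proof (rule ccontr)
    assume "\<not> a \<le> t0"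
    then have "\<zeta> a \<le> \<zeta> t0"
      using decreasing by (simp add: antimonoD)
    with that t0 show False
      by (simp add: A_def)
  qed
  then have bdd: "bdd_above A"
    by (auto simp: bdd_above_def)
  have "closed A"
    unfolding A_def by (intro closed_Collect_le continuous_on_const continuous)
  then have "Sup A \<in> A"
    using True bdd by (intro closed_contains_Sup) (auto simp: A_def)
  have "s \<le> \<zeta> t \<longleftrightarrow> t \<le> Sup A" for t
  proof
    assume "s \<le> \<zeta> t"
    then show "t \<le> Sup A"
      using bdd by (intro cSup_upper) (auto simp: A_def)
  next
    assume "t \<le> Sup A"
    then have "\<zeta> (Sup A) \<le> \<zeta> t"
      using decreasing by (simp add: antimonoD)
    then show "s \<le> \<zeta> t"
      using \<open>Sup A \<in> A\<close> by (simp add: A_def)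
  qed
  then show ?thesis
    using that(2) by blast
qed

lemma threshold_value:
  assumes \<tau>: "\<And>t. s \<le> \<zeta> t \<longleftrightarrow> t \<le> \<tau>"
  shows "\<zeta> \<tau> = s"
proof -
  have "isCont \<zeta> \<tau>"
    using continuous by (simp add: continuous_on_eq_continuous_at)
  moreover have "(\<lambda>n. \<tau> + inverse (real (Suc n))) \<longlonglongrightarrow> \<tau>"
    using tendsto_add[OF tendsto_const LIMSEQ_inverse_real_of_nat, of \<tau>] by simp
  ultimately have "(\<lambda>n. \<zeta> (\<tau> + inverse (real (Suc n)))) \<longlonglongrightarrow> \<zeta> \<tau>"
    by (rule isCont_tendsto_compose)
  moreover have "\<zeta> (\<tau> + inverse (real (Suc n))) \<le> s" for n
    using \<tau>[of "\<tau> + inverse (real (Suc n))"] by simp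
  ultimately have "\<zeta> \<tau> \<le> s"
    by (intro LIMSEQ_le_const2) auto
  moreover have "s \<le> \<zeta> \<tau>"
    using \<tau> by simp
  ultimately show ?thesis
    by simp
qed

lemma indicator_under_graph_measurable:
  "(\<lambda>p. indicator (under_graph \<zeta>) p :: ennreal) \<in> borel_measurable (lborel \<Otimes>\<^sub>M lborel)"
proof -
  have [measurable]: "\<zeta> \<in> borel_measurable borel"
    using continuous by (rule borel_measurable_continuous_onI)
  show ?thesis
    unfolding under_graph_def split_beta' by measurable
qed

lemma level_length_measurable [measurable]: "level_length \<zeta> \<in> borel_measurable lborel"
  unfolding level_length_def using indicator_under_graph_measurable by measurable

text \<open>Layer-cake formula, by Fubini on \<open>under_graph \<zeta>\<close>.\<close>
lemma nn_integral_level_length: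
  "(\<integral>\<^sup>+ s. level_length \<zeta> s \<partial>lborel) = (\<integral>\<^sup>+ t. ennreal (\<zeta> t) * indicator {0..} t \<partial>lborel)"
proof -
  have "(\<integral>\<^sup>+ s. level_length \<zeta> s \<partial>lborel)
      = (\<integral>\<^sup>+ t. (\<integral>\<^sup>+ s. indicator (under_graph \<zeta>) (s, t) \<partial>lborel) \<partial>lborel)"
    unfolding level_length_def
    by (rule lborel_pair.Fubini'[symmetric]) (use indicator_under_graph_measurable in simp)
  also have "\<dots> = (\<integral>\<^sup>+ t. ennreal (\<zeta> t) * indicator {0..} t \<partial>lborel)"
  proof (rule nn_integral_cong)
    fix t :: real
    have "(\<lambda>s. indicator (under_graph \<zeta>) (s, t) :: ennreal)
        = (\<lambda>s. indicator {0<..\<zeta> t} s * indicator {0..} t)"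
      by (auto simp: under_graph_def indicator_def)
    then show "(\<integral>\<^sup>+ s. indicator (under_graph \<zeta>) (s, t) \<partial>lborel) = ennreal (\<zeta> t) * indicator {0..} t"
      using nonneg[of t] by (simp add: nn_integral_multc)
  qed
  finally show ?thesis .
qed

lemma nn_integral_dominator_finite:
  "(\<integral>\<^sup>+ s. ennreal A * indicator {0..\<zeta> L} s + ennreal B * level_length \<zeta> s \<partial>lborel) < \<infinity>"
proof -
  have "(\<integral>\<^sup>+ s. ennreal A * indicator {0..\<zeta> L} s + ennreal B * level_length \<zeta> s \<partial>lborel)
      = ennreal A * ennreal (\<zeta> L) + ennreal B * (\<integral>\<^sup>+ t. ennreal (\<zeta> t) * indicator {0..} t \<partial>lborel)"
    using nonneg[of L]
    by (simp add: nn_integral_add nn_integral_cmult nn_integral_cmult_indicator nn_integral_level_length)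
  also have "\<dots> < \<infinity>"
    using integrable by (simp add: ennreal_mult_less_top)
  finally show ?thesis .
qed

lemma hat_dH_superlevel_le:
  assumes s: "0 < s" and R: "0 \<le> R" and C: "0 \<le> C"
    and v: "affine_sublevel_bound L R C v" and w: "affine_sublevel_bound L R C w"
  shows "ennreal (hat_dH (superlevel \<zeta> v s) (superlevel \<zeta> w s))
    \<le> ennreal (1 + 2 * R) * indicator {0..\<zeta> L} s + ennreal (2 * C) * level_length \<zeta> s"
proof (cases rule: threshold_cases[OF s])
  case 1
  then show ?thesis
    by (simp add: superlevel_empty[OF s 1])
next
  case (2 \<tau>)
  have "superlevel \<zeta> v s = {x. v x \<le> ereal \<tau>}"
    using s 2 affine_sublevel_bound_not_MInfty[OF v] by (rule superlevel_eq_sublevel)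
  moreover have "superlevel \<zeta> w s = {x. w x \<le> ereal \<tau>}"
    using s 2 affine_sublevel_bound_not_MInfty[OF w] by (rule superlevel_eq_sublevel)
  ultimately have superlevels: "superlevel \<zeta> v s = {x. v x \<le> ereal \<tau>}" "superlevel \<zeta> w s = {x. w x \<le> ereal \<tau>}"
    by simp_all
  show ?thesis
  proof (cases "L < \<tau>")
    case False
    then have "{x. v x \<le> ereal \<tau>} = {}" "{x. w x \<le> ereal \<tau>} = {}"
      using v w by (auto simp: affine_sublevel_bound_def)
    then show ?thesis
      using superlevels by (simp add: hat_dH_def)
  next
    case True
    have "hat_dH {x. v x \<le> ereal \<tau>} {x. w x \<le> ereal \<tau>} \<le> 1 + 2 * (R + C * max 0 \<tau>)"
      using v w R C by (intro hat_dH_le_norm_bound) (auto simp: affine_sublevel_bound_def)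
    then have "ennreal (hat_dH (superlevel \<zeta> v s) (superlevel \<zeta> w s))
        \<le> ennreal (1 + 2 * R) + ennreal (2 * C) * ennreal (max 0 \<tau>)"
      using superlevels R C by (simp add: ennreal_leI algebra_simps flip: ennreal_plus ennreal_mult)
    moreover have "s \<le> \<zeta> L"
      using 2[of \<tau>] True decreasing by (auto simp: antimonoD intro: order_trans)
    moreover have "level_length \<zeta> s = ennreal (max 0 \<tau>)"
      by (rule level_length_eq[OF s 2])
    ultimately show ?thesis
      using s by simp
  qed
qed

end

section \<open>Convergence of the distance\<close>

text \<open>The integrands need not be measurable: their integrals are approximated from below by
  simple functions, to which dominated convergence applies.\<close>
lemma nn_integral_tendsto_0_dominated:
  fixes f :: "nat \<Rightarrow> 'b \<Rightarrow> ennreal"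
  assumes G: "G \<in> borel_measurable M" "(\<integral>\<^sup>+x. G x \<partial>M) < \<infinity>"
    and dom: "eventually (\<lambda>k. AE x in M. f k x \<le> G x) sequentially"
    and lim: "AE x in M. (\<lambda>k. f k x) \<longlonglongrightarrow> 0"
  shows "(\<lambda>k. integral\<^sup>N M (f k)) \<longlonglongrightarrow> 0"
proof (rule ccontr)
  assume "\<not> ?thesis"
  then obtain e :: ennreal where "0 < e" and fr: "\<exists>\<^sub>F k in sequentially. e \<le> integral\<^sup>N M (f k)"
    unfolding order_tendsto_iff by (auto simp: not_eventually not_less)
  obtain d where d: "0 < d" "d < e"
    using dense[OF \<open>0 < e\<close>] by blast
  obtain r :: "nat \<Rightarrow> nat"
    where r: "strict_mono r" "\<And>j. e \<le> integral\<^sup>N M (f (r j)) \<and> (AE x in M. f (r j) x \<le> G x)"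
    using frequently_sequentially_subseq[OF frequently_eventually_frequently[OF fr dom]] by metis
  have "\<exists>g. simple_function M g \<and> g \<le> f (r j) \<and> d < integral\<^sup>S M g" for j
  proof -
    have "d < integral\<^sup>N M (f (r j))"
      using d(2) r(2)[THEN conjunct1] by (rule order.strict_trans2)
    then show ?thesis
      unfolding nn_integral_def by (auto simp: less_SUP_iff)
  qed
  then obtain g where g: "\<And>j. simple_function M (g j)" "\<And>j. g j \<le> f (r j)" "\<And>j. d < integral\<^sup>S M (g j)"
    by metis
  have "(\<lambda>j. \<integral>\<^sup>+ x. g j x \<partial>M) \<longlonglongrightarrow> (\<integral>\<^sup>+ x. 0 \<partial>M)"
  proof (rule nn_integral_dominated_convergence[OF borel_measurable_simple_function[OF g(1)] _ G(1) _ G(2)])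
    show "AE x in M. g j x \<le> G x" for j
      using r(2)[of j, THEN conjunct2] by eventually_elim (use g(2)[of j] in \<open>auto simp: le_fun_def intro: order_trans\<close>)
    show "AE x in M. (\<lambda>j. g j x) \<longlonglongrightarrow> 0"
      using lim
    proof eventually_elim
      case (elim x)
      then have "(\<lambda>j. f (r j) x) \<longlonglongrightarrow> 0"
        using LIMSEQ_subseq_LIMSEQ[OF elim r(1)] by (simp add: o_def)
      moreover have "g j x \<le> f (r j) x" for j
        using g(2) by (rule le_funD)
      ultimately show ?case
        using tendsto_sandwich[of "\<lambda>_. 0" "\<lambda>j. g j x" sequentially "\<lambda>j. f (r j) x" 0] by auto
    qed
  qed simp
  then have "eventually (\<lambda>j. integral\<^sup>N M (g j) < d) sequentially"
    using d(1) by (simp add: order_tendstoD)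
  then obtain j where "integral\<^sup>N M (g j) < d"
    by (auto dest: eventually_happens)
  moreover have "d < integral\<^sup>N M (g j)"
    using g(1,3) by (simp add: nn_integral_eq_simple_integral)
  ultimately show False
    by simp
qed

definition delta_H_integrand :: "(real \<Rightarrow> real) \<Rightarrow> ('a::euclidean_space \<Rightarrow> ereal) \<Rightarrow> ('a \<Rightarrow> ereal) \<Rightarrow> real \<Rightarrow> ennreal" where
  "delta_H_integrand \<zeta> v w s = ennreal (hat_dH (superlevel \<zeta> v s) (superlevel \<zeta> w s)) * indicator {0..} s"

locale epi_convergent_weighted = epi_convergent_Conv_coe us u + decreasing_weight \<zeta>
  for us :: "nat \<Rightarrow> 'a::euclidean_space \<Rightarrow> ereal" and u and \<zeta>
begin

lemma delta_H_integrand_dominated: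
  obtains G where "G \<in> borel_measurable lborel" "(\<integral>\<^sup>+ s. G s \<partial>lborel) < \<infinity>"
    "eventually (\<lambda>k. AE s in lborel. delta_H_integrand \<zeta> (us k) u s \<le> G s) sequentially"
proof -
  obtain L R C where R: "0 \<le> R" and C: "0 \<le> C" and u: "affine_sublevel_bound L R C u"
    and us: "eventually (\<lambda>k. affine_sublevel_bound L R C (us k)) sequentially"
    by (rule sublevels_eventually_affinely_bounded)
  define G where "G s = ennreal (1 + 2 * R) * indicator {0..\<zeta> L} s + ennreal (2 * C) * level_length \<zeta> s" for s
  have "eventually (\<lambda>k. AE s in lborel. delta_H_integrand \<zeta> (us k) u s \<le> G s) sequentially"
    using us
  proof eventually_elim
    fix k assume us_k: "affine_sublevel_bound L R C (us k)"
    have "delta_H_integrand \<zeta> (us k) u s \<le> G s" if "s \<noteq> 0" for s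
    proof (cases "0 < s")
      case True
      then show ?thesis
        using hat_dH_superlevel_le[OF True R C us_k u] by (simp add: delta_H_integrand_def G_def)
    next
      case False
      with that show ?thesis
        by (simp add: delta_H_integrand_def)
    qed
    then show "AE s in lborel. delta_H_integrand \<zeta> (us k) u s \<le> G s"
      using AE_lborel_singleton[of 0] by (auto elim: eventually_mono)
  qed
  moreover have "G \<in> borel_measurable lborel"
    unfolding G_def by measurable
  moreover have "(\<integral>\<^sup>+ s. G s \<partial>lborel) < \<infinity>"
    unfolding G_def by (rule nn_integral_dominator_finite)
  ultimately show ?thesis
    using that by blast
qed

lemma delta_H_integrand_tendsto_0:
  "AE s in lborel. (\<lambda>k. delta_H_integrand \<zeta> (us k) u s) \<longlonglongrightarrow> 0"
proof -
  obtain x0 m where x0: "u x0 = ereal m" and min: "\<And>x. ereal m \<le> u x"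
    using Conv_coe_attains_min[OF u_Conv_coe] by blast
  have pointwise: "(\<lambda>k. delta_H_integrand \<zeta> (us k) u s) \<longlonglongrightarrow> 0" if "s \<noteq> 0" "s \<noteq> \<zeta> m" for s
  proof (cases "0 < s")
    case False
    with that(1) show ?thesis
      by (simp add: delta_H_integrand_def)
  next
    case s: True
    show ?thesis
    proof (cases rule: threshold_cases[OF s])
      case 1
      then show ?thesis
        by (simp add: delta_H_integrand_def superlevel_empty[OF s 1])
    next
      case (2 \<tau>)
      then have "delta_H_integrand \<zeta> (us k) u s
          = ennreal (hat_dH {x. us k x \<le> ereal \<tau>} {x. u x \<le> ereal \<tau>})" for k
        using s by (simp add: delta_H_integrand_def superlevel_eq_sublevel Conv_coe_not_MInfty
            us_Conv_coe u_Conv_coe)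
      moreover have "\<tau> \<noteq> m"
        using threshold_value[OF 2] that(2) by auto
      ultimately show ?thesis
        using sublevels_hat_dH_tendsto_0[OF x0 min] by simp
    qed
  qed
  show ?thesis
    using AE_conjI[OF AE_lborel_singleton[of 0] AE_lborel_singleton[of "\<zeta> m"]]
    by (rule eventually_mono) (blast intro: pointwise)
qed

end

theorem lemma5p6:
  fixes \<zeta> :: "real \<Rightarrow> real"
    and us :: "nat \<Rightarrow> 'a::euclidean_space \<Rightarrow> ereal"
    and u :: "'a \<Rightarrow> ereal"
  assumes "continuous_on UNIV \<zeta>"
    and "\<And>t. \<zeta> t \<ge> 0"
    and "antimono \<zeta>"
    and "(\<integral>\<^sup>+ t. ennreal (\<zeta> t) * indicator {0..} t \<partial>lborel) < \<infinity>"
    and "\<And>k. us k \<in> Conv_coe"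
    and "u \<in> Conv_coe"
    and "epi_converges us u"
  shows "(\<lambda>k. delta_H \<zeta> (us k) u) \<longlonglongrightarrow> 0"
proof -
  interpret epi_convergent_weighted us u \<zeta>
    using assms by unfold_locales auto
  obtain G where "G \<in> borel_measurable lborel" "(\<integral>\<^sup>+ s. G s \<partial>lborel) < \<infinity>"
    "eventually (\<lambda>k. AE s in lborel. delta_H_integrand \<zeta> (us k) u s \<le> G s) sequentially"
    by (rule delta_H_integrand_dominated)
  then have "(\<lambda>k. \<integral>\<^sup>+ s. delta_H_integrand \<zeta> (us k) u s \<partial>lborel) \<longlonglongrightarrow> 0"
    using delta_H_integrand_tendsto_0 by (rule nn_integral_tendsto_0_dominated)
  then show ?thesis
    by (simp add: delta_H_def delta_H_integrand_def)
qed

end
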